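(* Let $G$ be an infinite locally finite graph and let $F$ be a spanning subgraph of $G$ that is faithful to $G$. If $F$ has a Hamiltonian circle, then $G$ has a Hamiltonian circle.
   Context: A ray is a one-way infinite path; two rays of a graph $H$ are equivalent in $H$ if for every finite $S\subseteq V(H)$ some component of $H-S$ contains tails of both; the classes are the ends of $H$. For finite $S$ and an end $\alpha$, $C(S,\alpha)$ is the component of $H-S$ containing tails of rays of $\alpha$. The Freudenthal compactification $|H|$ is the 1-complex of $H$ together with its ends, a basic open neighbourhood of an end $\alpha$ being, for finite $S$, the union of $C(S,\alpha)$, the ends whose rays have tails in $C(S,\alpha)$, and the inner points of edges between $S$ and $C(S,\alpha)$. A Hamiltonian circle of $H$ is the image of a homeomorphic embedding of $S^1$ into $|H|$ containing every vertex of $H$. A subgraph $F$ of $G$ is faithful to $G$ if (i) every end of $G$ contains a ray of $F$, and (ii) any two rays of $F$ are equivalent in $F$ if and only if they are equivalent in $G$. *)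

theory Defs
  imports "HOL-Analysis.Analysis"
begin

definition graph :: "'v set \<Rightarrow> 'v set set \<Rightarrow> bool" where
  "graph V E \<longleftrightarrow> (\<forall>e\<in>E. card e = 2 \<and> e \<subseteq> V)"

definition locally_finite :: "'v set \<Rightarrow> 'v set set \<Rightarrow> bool" where
  "locally_finite V E \<longleftrightarrow> (\<forall>v\<in>V. finite {e\<in>E. v \<in> e})"

definition is_ray :: "'v set \<Rightarrow> 'v set set \<Rightarrow> (nat \<Rightarrow> 'v) \<Rightarrow> bool" where
  "is_ray V E r \<longleftrightarrow> inj r \<and> (\<forall>n. r n \<in> V) \<and> (\<forall>n. {r n, r (Suc n)} \<in> E)"

definition comp :: "'v set \<Rightarrow> 'v set set \<Rightarrow> 'v set \<Rightarrow> 'v \<Rightarrow> 'v set" where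
  "comp V E S v = {w. (\<lambda>x y. x \<in> V - S \<and> y \<in> V - S \<and> {x, y} \<in> E)\<^sup>*\<^sup>* v w}"

definition components :: "'v set \<Rightarrow> 'v set set \<Rightarrow> 'v set \<Rightarrow> 'v set set" where
  "components V E S = {comp V E S v | v. v \<in> V - S}"

definition has_tail_in :: "(nat \<Rightarrow> 'v) \<Rightarrow> 'v set \<Rightarrow> bool" where
  "has_tail_in r C \<longleftrightarrow> (\<exists>n. \<forall>m\<ge>n. r m \<in> C)"

definition ray_equiv :: "'v set \<Rightarrow> 'v set set \<Rightarrow> (nat \<Rightarrow> 'v) \<Rightarrow> (nat \<Rightarrow> 'v) \<Rightarrow> bool" where
  "ray_equiv V E r1 r2 \<longleftrightarrow>
     (\<forall>S. finite S \<longrightarrow> S \<subseteq> V \<longrightarrow> (\<exists>C\<in>components V E S. has_tail_in r1 C \<and> has_tail_in r2 C))"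

definition ends :: "'v set \<Rightarrow> 'v set set \<Rightarrow> (nat \<Rightarrow> 'v) set set" where
  "ends V E = {{r'. is_ray V E r' \<and> ray_equiv V E r r'} | r. is_ray V E r}"

text \<open>Points of the Freudenthal compactification |H|: points of the 1-complex are given
  by barycentric coordinates (a vertex v is the indicator of v, an inner point of an
  edge e is a function supported on e with positive values summing to 1); ends are
  equivalence classes of rays.\<close>
datatype 'v fpoint = Pt "'v \<Rightarrow> real" | End "(nat \<Rightarrow> 'v) set"

definition vtx :: "'v \<Rightarrow> 'v fpoint" where
  "vtx v = Pt (\<lambda>x. if x = v then 1 else 0)"

definition inner_pts :: "'v set \<Rightarrow> 'v fpoint set" where
  "inner_pts e = {Pt f | f. (\<forall>x. x \<notin> e \<longrightarrow> f x = 0) \<and> (\<forall>x\<in>e. 0 < f x) \<and> sum f e = 1}"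

definition edge_intervals :: "'v set \<Rightarrow> 'v set set \<Rightarrow> 'v fpoint set set" where
  "edge_intervals V E =
     {{Pt f | f. Pt f \<in> inner_pts e \<and> a < f u \<and> f u < b} | e u a b. e \<in> E \<and> u \<in> e}"

definition vertex_stars :: "'v set \<Rightarrow> 'v set set \<Rightarrow> 'v fpoint set set" where
  "vertex_stars V E =
     {insert (vtx v) {Pt f | f. \<exists>e\<in>E. v \<in> e \<and> Pt f \<in> inner_pts e \<and> 1 - \<epsilon> < f v}
       | v \<epsilon>. v \<in> V \<and> 0 < \<epsilon>}"

text \<open>Basic open neighbourhoods of ends: for finite S and a component C = C(S,\<alpha>) of H - S
  in which some end \<alpha> lives, the union of C (its vertices and inner points of its edges),
  the ends living in C, and the inner points of S--C edges.\<close>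
definition end_nbhds :: "'v set \<Rightarrow> 'v set set \<Rightarrow> 'v fpoint set set" where
  "end_nbhds V E =
     {{vtx v | v. v \<in> C}
      \<union> (\<Union>{inner_pts e | e. e \<in> E \<and> e \<inter> C \<noteq> {}})
      \<union> {End \<beta> | \<beta>. \<beta> \<in> ends V E \<and> (\<forall>r\<in>\<beta>. has_tail_in r C)}
      | S C. finite S \<and> S \<subseteq> V \<and> C \<in> components V E S \<and>
             (\<exists>\<alpha>\<in>ends V E. \<forall>r\<in>\<alpha>. has_tail_in r C)}"

definition freudenthal :: "'v set \<Rightarrow> 'v set set \<Rightarrow> 'v fpoint topology" where
  "freudenthal V E = topology_generated_by (edge_intervals V E \<union> vertex_stars V E \<union> end_nbhds V E)"

definition hamiltonian_circle :: "'v set \<Rightarrow> 'v set set \<Rightarrow> 'v fpoint set \<Rightarrow> bool" where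
  "hamiltonian_circle V E Z \<longleftrightarrow>
     (\<exists>\<phi>. embedding_map (top_of_set (sphere (0::complex) 1)) (freudenthal V E) \<phi>
          \<and> \<phi> ` sphere 0 1 = Z) \<and> (\<forall>v\<in>V. vtx v \<in> Z)"

definition faithful :: "'v set \<Rightarrow> 'v set set \<Rightarrow> 'v set \<Rightarrow> 'v set set \<Rightarrow> bool" where
  "faithful VF EF VG EG \<longleftrightarrow>
     (\<forall>\<alpha>\<in>ends VG EG. \<exists>r\<in>\<alpha>. is_ray VF EF r) \<and>
     (\<forall>r1 r2. is_ray VF EF r1 \<longrightarrow> is_ray VF EF r2 \<longrightarrow>
        (ray_equiv VF EF r1 r2 \<longleftrightarrow> ray_equiv VG EG r1 r2))"

end

theory Submission
  imports Defs
begin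

text \<open>Every point of the 1-complex of F is a point of the 1-complex of G, and every end of F
  lies in a unique end of G; this gives a natural map from |F| to |G| fixing all vertices. It is
  injective by condition (ii) of faithfulness, and continuous because the component of G - S in
  which an end of F lives contains the component of F - S in which it lives. Composing a
  Hamiltonian circle of F with this map gives a continuous injection of the circle into |G|
  through every vertex, and this is an embedding because the circle is compact and |G| is
  Hausdorff (an end is separated from a vertex v by deleting v and its finitely many neighbours).\<close>

section \<open>Components and ends\<close>

abbreviation outside_edge :: "'v set \<Rightarrow> 'v set set \<Rightarrow> 'v set \<Rightarrow> 'v \<Rightarrow> 'v \<Rightarrow> bool" where
  "outside_edge V E S \<equiv> \<lambda>x y. x \<in> V - S \<and> y \<in> V - S \<and> {x, y} \<in> E"

lemma comp_subset:
  assumes "v \<in> V - S"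
  shows "comp V E S v \<subseteq> V - S"
proof
  fix w assume "w \<in> comp V E S v"
  then have "(outside_edge V E S)\<^sup>*\<^sup>* v w" by (simp add: comp_def)
  then show "w \<in> V - S" using assms by (induction rule: rtranclp_induct) auto
qed

lemma comp_eq_if_mem:
  assumes "w \<in> comp V E S v"
  shows "comp V E S w = comp V E S v"
proof -
  have "symp (outside_edge V E S)" by (auto intro: sympI simp: insert_commute)
  then have vw: "(outside_edge V E S)\<^sup>*\<^sup>* v w" and wv: "(outside_edge V E S)\<^sup>*\<^sup>* w v"
    using assms sympD[OF symp_rtranclp] by (auto simp: comp_def)
  show ?thesis unfolding comp_def using rtranclp_trans[OF vw] rtranclp_trans[OF wv] by blast
qed

lemma comp_mono:
  assumes "EF \<subseteq> EG"
  shows "comp V EF S v \<subseteq> comp V EG S v"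
proof -
  have "outside_edge V EF S \<le> outside_edge V EG S" using assms by auto
  then show ?thesis unfolding comp_def using rtranclp_mono by blast
qed

lemma components_iff: "C \<in> components V E S \<longleftrightarrow> (\<exists>v\<in>V - S. C = comp V E S v)"
  unfolding components_def by blast

lemma components_subset:
  assumes "C \<in> components V E S"
  shows "C \<subseteq> V - S"
proof -
  from assms obtain v where "v \<in> V - S" "C = comp V E S v" unfolding components_iff ..
  then show ?thesis using comp_subset by simp
qed

lemma components_eq_comp:
  assumes "C \<in> components V E S" "x \<in> C"
  shows "C = comp V E S x"
proof -
  from assms(1) obtain v where "C = comp V E S v" unfolding components_iff ..
  then show ?thesis using assms(2) comp_eq_if_mem[of x V E S v] by simp
qed

lemma components_eqI:
  "C1 \<in> components V E S \<Longrightarrow> C2 \<in> components V E S \<Longrightarrow> x \<in> C1 \<Longrightarrow> x \<in> C2 \<Longrightarrow> C1 = C2"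
  using components_eq_comp by metis

lemma components_mono:
  assumes "EF \<subseteq> EG" "C \<in> components V EF S"
  shows "\<exists>D\<in>components V EG S. C \<subseteq> D"
proof -
  from assms(2) obtain v where v: "v \<in> V - S" "C = comp V EF S v" unfolding components_iff ..
  then have "comp V EG S v \<in> components V EG S" unfolding components_iff by auto
  with v show ?thesis using comp_mono[OF assms(1), of V S v] by metis
qed

lemma graph_edge_card: "graph V E \<Longrightarrow> e \<in> E \<Longrightarrow> card e = 2"
  unfolding graph_def by simp

lemma card_2_eq_doubleton:
  assumes "card e = 2" "x \<in> e" "y \<in> e" "x \<noteq> y"
  shows "e = {x, y}"
proof -
  have "finite e" using assms(1) by (intro card_ge_0_finite) simp
  then show ?thesis using assms by (intro card_subset_eq[symmetric]) auto
qed

lemma components_eq_if_edge: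
  assumes "graph V E" "e \<in> E" "C1 \<in> components V E S" "C2 \<in> components V E S"
    and "e \<inter> C1 \<noteq> {}" "e \<inter> C2 \<noteq> {}"
  shows "C1 = C2"
proof -
  obtain x y where xy: "x \<in> e" "x \<in> C1" "y \<in> e" "y \<in> C2" using assms(5,6) by blast
  show ?thesis
  proof (cases "x = y")
    case False
    then have "{x, y} \<in> E"
      using card_2_eq_doubleton[OF graph_edge_card[OF assms(1,2)] xy(1,3)] assms(2) by simp
    moreover have "x \<in> V - S" "y \<in> V - S" using xy assms(3,4) components_subset by blast+
    ultimately have "(outside_edge V E S)\<^sup>*\<^sup>* x y" by (simp add: r_into_rtranclp)
    then have "y \<in> C1" using components_eq_comp[OF assms(3) xy(2)] by (simp add: comp_def)
    then show ?thesis by (rule components_eqI[OF assms(3,4) _ xy(4)])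
  qed (use xy components_eqI[OF assms(3,4)] in metis)
qed

lemma is_ray_mono: "EF \<subseteq> EG \<Longrightarrow> is_ray V EF r \<Longrightarrow> is_ray V EG r"
  unfolding is_ray_def by auto

lemma has_tail_in_mono: "has_tail_in r C \<Longrightarrow> C \<subseteq> D \<Longrightarrow> has_tail_in r D"
  unfolding has_tail_in_def by blast

lemma ray_has_tail_in_component:
  assumes "is_ray V E r" "finite S"
  shows "\<exists>C\<in>components V E S. has_tail_in r C"
proof -
  have "finite (r -` S)" using assms by (simp add: finite_vimageI is_ray_def)
  then obtain N where N: "\<And>n. r n \<in> S \<Longrightarrow> n < N"
    using finite_nat_set_iff_bounded by (meson vimageI)
  have outside: "r m \<in> V - S" if "m \<ge> N" for m
    using N[of m] that assms(1) by (auto simp: is_ray_def)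
  have "(outside_edge V E S)\<^sup>*\<^sup>* (r N) (r (N + k))" for k
  proof (induction k)
    case (Suc k)
    have "outside_edge V E S (r (N + k)) (r (N + Suc k))"
      using outside assms(1) by (auto simp: is_ray_def)
    with Suc.IH show ?case by (rule rtranclp.rtrancl_into_rtrancl)
  qed simp
  then have "\<forall>m\<ge>N. r m \<in> comp V E S (r N)"
    by (auto simp: comp_def dest!: le_Suc_ex)
  moreover have "comp V E S (r N) \<in> components V E S"
    unfolding components_iff using outside by blast
  ultimately show ?thesis unfolding has_tail_in_def by blast
qed

lemma has_tail_in_components_unique:
  assumes "C1 \<in> components V E S" "C2 \<in> components V E S" "has_tail_in r C1" "has_tail_in r C2"
  shows "C1 = C2"
proof -
  obtain n1 n2 where "\<forall>m\<ge>n1. r m \<in> C1" "\<forall>m\<ge>n2. r m \<in> C2"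
    using assms(3,4) by (auto simp: has_tail_in_def)
  then have "r (max n1 n2) \<in> C1" "r (max n1 n2) \<in> C2" by auto
  then show ?thesis using components_eqI[OF assms(1,2)] by blast
qed

lemma ray_equiv_refl: "is_ray V E r \<Longrightarrow> ray_equiv V E r r"
  unfolding ray_equiv_def using ray_has_tail_in_component by blast

lemma ray_equiv_sym: "ray_equiv V E r1 r2 \<Longrightarrow> ray_equiv V E r2 r1"
  unfolding ray_equiv_def by blast

lemma ray_equiv_trans:
  assumes "ray_equiv V E r1 r2" "ray_equiv V E r2 r3"
  shows "ray_equiv V E r1 r3"
  unfolding ray_equiv_def
proof (intro allI impI)
  fix S assume "finite S" "S \<subseteq> V"
  then obtain C C' where "C \<in> components V E S" "has_tail_in r1 C" "has_tail_in r2 C"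
    and "C' \<in> components V E S" "has_tail_in r2 C'" "has_tail_in r3 C'"
    using assms unfolding ray_equiv_def by blast
  then show "\<exists>C\<in>components V E S. has_tail_in r1 C \<and> has_tail_in r3 C"
    using has_tail_in_components_unique by blast
qed

lemma ray_equiv_mono:
  assumes "EF \<subseteq> EG" "ray_equiv V EF r1 r2"
  shows "ray_equiv V EG r1 r2"
  unfolding ray_equiv_def
proof (intro allI impI)
  fix S assume "finite S" "S \<subseteq> V"
  then obtain C where "C \<in> components V EF S" "has_tail_in r1 C" "has_tail_in r2 C"
    using assms(2) unfolding ray_equiv_def by blast
  then show "\<exists>D\<in>components V EG S. has_tail_in r1 D \<and> has_tail_in r2 D"
    using components_mono[OF assms(1)] has_tail_in_mono by meson
qed

definition end_of :: "'v set \<Rightarrow> 'v set set \<Rightarrow> (nat \<Rightarrow> 'v) \<Rightarrow> (nat \<Rightarrow> 'v) set" where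
  "end_of V E r = {r'. is_ray V E r' \<and> ray_equiv V E r r'}"

lemma ends_iff: "\<alpha> \<in> ends V E \<longleftrightarrow> (\<exists>r. is_ray V E r \<and> \<alpha> = end_of V E r)"
  unfolding ends_def end_of_def by blast

lemma end_of_ends: "is_ray V E r \<Longrightarrow> end_of V E r \<in> ends V E"
  using ends_iff by blast

lemma mem_end_of: "is_ray V E r \<Longrightarrow> r \<in> end_of V E r"
  unfolding end_of_def using ray_equiv_refl by blast

lemma ends_is_ray: "\<alpha> \<in> ends V E \<Longrightarrow> r \<in> \<alpha> \<Longrightarrow> is_ray V E r"
  unfolding ends_iff end_of_def by auto

lemma ends_nonempty: "\<alpha> \<in> ends V E \<Longrightarrow> \<exists>r. r \<in> \<alpha>"
  unfolding ends_iff using mem_end_of by auto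

lemma ends_eq_end_of:
  assumes "\<alpha> \<in> ends V E" "r \<in> \<alpha>"
  shows "\<alpha> = end_of V E r"
proof -
  from assms(1) obtain r0 where r0: "is_ray V E r0" "\<alpha> = end_of V E r0" unfolding ends_iff by auto
  with assms(2) have "ray_equiv V E r0 r" "ray_equiv V E r r0"
    unfolding end_of_def using ray_equiv_sym by auto
  then show ?thesis unfolding r0(2) end_of_def using ray_equiv_trans by auto
qed

lemma end_of_eq_iff:
  assumes "is_ray V E r1" "is_ray V E r2"
  shows "end_of V E r1 = end_of V E r2 \<longleftrightarrow> ray_equiv V E r1 r2"
proof
  assume "end_of V E r1 = end_of V E r2"
  then show "ray_equiv V E r1 r2" using mem_end_of[OF assms(2)] by (auto simp: end_of_def)
next
  assume "ray_equiv V E r1 r2"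
  then have "r2 \<in> end_of V E r1" using assms(2) by (simp add: end_of_def)
  then show "end_of V E r1 = end_of V E r2" by (rule ends_eq_end_of[OF end_of_ends[OF assms(1)]])
qed

lemma end_has_tail_in_componentI:
  assumes "\<alpha> \<in> ends V E" "r \<in> \<alpha>" "has_tail_in r C" "C \<in> components V E S" "finite S" "S \<subseteq> V"
  shows "\<forall>r'\<in>\<alpha>. has_tail_in r' C"
proof
  fix r' assume "r' \<in> \<alpha>"
  then have "ray_equiv V E r r'" using ends_eq_end_of[OF assms(1,2)] by (simp add: end_of_def)
  then obtain C' where "C' \<in> components V E S" "has_tail_in r C'" "has_tail_in r' C'"
    using assms(5,6) unfolding ray_equiv_def by auto
  then show "has_tail_in r' C" using has_tail_in_components_unique[OF _ assms(4) _ assms(3)] by auto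
qed

lemma end_has_tail_in_component:
  assumes "\<alpha> \<in> ends V E" "finite S" "S \<subseteq> V"
  shows "\<exists>C\<in>components V E S. \<forall>r\<in>\<alpha>. has_tail_in r C"
proof -
  obtain r where r: "r \<in> \<alpha>" using ends_nonempty[OF assms(1)] ..
  then obtain C where "C \<in> components V E S" "has_tail_in r C"
    using ray_has_tail_in_component ends_is_ray assms by metis
  then show ?thesis using end_has_tail_in_componentI[OF assms(1) r] assms by auto
qed

text \<open>The end of the whole graph containing an end \<open>\<beta>\<close> of a spanning subgraph; by
  \<open>coarser_end_eq\<close> it does not depend on the ray chosen from \<open>\<beta>\<close>.\<close>

definition coarser_end :: "'v set \<Rightarrow> 'v set set \<Rightarrow> (nat \<Rightarrow> 'v) set \<Rightarrow> (nat \<Rightarrow> 'v) set" where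
  "coarser_end V E \<beta> = end_of V E (SOME r. r \<in> \<beta>)"

lemma coarser_end_eq:
  assumes "EF \<subseteq> EG" "\<beta> \<in> ends V EF" "r \<in> \<beta>"
  shows "coarser_end V EG \<beta> = end_of V EG r"
proof -
  define r0 where "r0 = (SOME r. r \<in> \<beta>)"
  have "r0 \<in> \<beta>" unfolding r0_def using assms(3) by (auto simp: some_in_eq)
  then have "ray_equiv V EF r0 r"
    using ends_eq_end_of[OF assms(2)] assms(3) by (auto simp: end_of_def)
  moreover have "is_ray V EF r0" "is_ray V EF r" using \<open>r0 \<in> \<beta>\<close> assms(2,3) ends_is_ray by auto
  ultimately show ?thesis
    unfolding coarser_end_def r0_def[symmetric]
    using end_of_eq_iff is_ray_mono[OF assms(1)] ray_equiv_mono[OF assms(1)] by metis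
qed

lemma coarser_end_ends:
  assumes "EF \<subseteq> EG" "\<beta> \<in> ends V EF"
  shows "coarser_end V EG \<beta> \<in> ends V EG"
  using assms coarser_end_eq end_of_ends ends_is_ray ends_nonempty is_ray_mono by metis

lemma inj_on_coarser_end:
  assumes "EF \<subseteq> EG" "faithful V EF V EG"
  shows "inj_on (coarser_end V EG) (ends V EF)"
proof
  fix \<beta>1 \<beta>2 assume \<beta>: "\<beta>1 \<in> ends V EF" "\<beta>2 \<in> ends V EF"
    and eq: "coarser_end V EG \<beta>1 = coarser_end V EG \<beta>2"
  obtain r1 r2 where r: "r1 \<in> \<beta>1" "r2 \<in> \<beta>2" using \<beta> ends_nonempty by metis
  then have F: "is_ray V EF r1" "is_ray V EF r2" using \<beta> ends_is_ray by auto
  have "end_of V EG r1 = end_of V EG r2" using eq coarser_end_eq assms(1) \<beta> r by metis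
  then have "ray_equiv V EG r1 r2" using end_of_eq_iff F is_ray_mono assms(1) by metis
  then have "ray_equiv V EF r1 r2" using assms(2) F unfolding faithful_def by blast
  then show "\<beta>1 = \<beta>2" using end_of_eq_iff F ends_eq_end_of \<beta> r by metis
qed

section \<open>Points and basic open sets of the Freudenthal compactification\<close>

lemma vtx_eq_iff [simp]: "vtx v = vtx w \<longleftrightarrow> v = w"
proof
  assume "vtx v = vtx w"
  then have "(\<lambda>x. if x = v then 1 else 0) = (\<lambda>x. if x = w then (1::real) else 0)"
    by (simp add: vtx_def)
  from fun_cong[OF this, of v] show "v = w" by (simp split: if_splits)
qed simp

lemma vtx_neq_End [simp]: "vtx v \<noteq> End \<beta>" "End \<beta> \<noteq> vtx v"
  by (simp_all add: vtx_def)

lemma Pt_in_inner_pts_iff: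
  "Pt f \<in> inner_pts e \<longleftrightarrow> (\<forall>x. x \<notin> e \<longrightarrow> f x = 0) \<and> (\<forall>x\<in>e. 0 < f x) \<and> sum f e = 1"
  unfolding inner_pts_def by simp

lemma inner_pts_Pt: "p \<in> inner_pts e \<Longrightarrow> \<exists>f. p = Pt f"
  unfolding inner_pts_def by auto

lemma End_notin_inner_pts [simp]: "End \<beta> \<notin> inner_pts e"
  using inner_pts_Pt by auto

lemma inner_pts_disjoint:
  assumes "p \<in> inner_pts e" "p \<in> inner_pts e'"
  shows "e = e'"
proof -
  obtain f where f: "p = Pt f" using inner_pts_Pt assms(1) by auto
  have support: "e = {x. 0 < f x}" if "Pt f \<in> inner_pts e" for e
    using that unfolding Pt_in_inner_pts_iff by force
  show ?thesis using support[of e] support[of e'] assms f by simp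
qed

lemma vtx_notin_inner_pts:
  assumes "card e = 2"
  shows "vtx v \<notin> inner_pts e"
proof
  assume "vtx v \<in> inner_pts e"
  then have "\<forall>x\<in>e. x = v" unfolding vtx_def Pt_in_inner_pts_iff by (metis less_irrefl)
  then have "e \<subseteq> {v}" by auto
  then have "card e \<le> 1" using card_mono[of "{v}" e] by simp
  with assms show False by simp
qed

lemma inner_pts_coord_sum:
  assumes "card e = 2" "u \<in> e" "w \<in> e" "u \<noteq> w" "Pt f \<in> inner_pts e"
  shows "f u + f w = 1"
  using assms card_2_eq_doubleton[OF assms(1-4)] by (simp add: Pt_in_inner_pts_iff)

lemma inner_pts_coord_bounds:
  assumes "card e = 2" "u \<in> e" "Pt f \<in> inner_pts e"
  shows "0 < f u" "f u < 1"
proof -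
  obtain w where "w \<in> e" "w \<noteq> u"
    using assms(1,2) by (metis card_2_iff insertCI)
  then show "0 < f u" "f u < 1"
    using assms inner_pts_coord_sum[OF assms(1,2) \<open>w \<in> e\<close> _ assms(3)]
    by (auto simp: Pt_in_inner_pts_iff)
qed

definition vertex_star :: "'v set set \<Rightarrow> 'v \<Rightarrow> real \<Rightarrow> 'v fpoint set" where
  "vertex_star E v \<epsilon> =
     insert (vtx v) {Pt f | f. \<exists>e\<in>E. v \<in> e \<and> Pt f \<in> inner_pts e \<and> 1 - \<epsilon> < f v}"

definition edge_interval :: "'v set \<Rightarrow> 'v \<Rightarrow> real \<Rightarrow> real \<Rightarrow> 'v fpoint set" where
  "edge_interval e u a b = {Pt f | f. Pt f \<in> inner_pts e \<and> a < f u \<and> f u < b}"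

definition end_nbhd :: "'v set \<Rightarrow> 'v set set \<Rightarrow> 'v set \<Rightarrow> 'v fpoint set" where
  "end_nbhd V E C =
     {vtx v | v. v \<in> C}
      \<union> (\<Union>{inner_pts e | e. e \<in> E \<and> e \<inter> C \<noteq> {}})
      \<union> {End \<beta> | \<beta>. \<beta> \<in> ends V E \<and> (\<forall>r\<in>\<beta>. has_tail_in r C)}"

lemma mem_vertex_star:
  "x \<in> vertex_star E v \<epsilon> \<longleftrightarrow>
     x = vtx v \<or> (\<exists>f e. x = Pt f \<and> e \<in> E \<and> v \<in> e \<and> Pt f \<in> inner_pts e \<and> 1 - \<epsilon> < f v)"
  unfolding vertex_star_def by auto

lemma mem_edge_interval:
  "x \<in> edge_interval e u a b \<longleftrightarrow> (\<exists>f. x = Pt f \<and> Pt f \<in> inner_pts e \<and> a < f u \<and> f u < b)"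
  unfolding edge_interval_def by auto

lemma mem_end_nbhd:
  "x \<in> end_nbhd V E C \<longleftrightarrow>
     (\<exists>v\<in>C. x = vtx v) \<or> (\<exists>e\<in>E. e \<inter> C \<noteq> {} \<and> x \<in> inner_pts e)
     \<or> (\<exists>\<beta>. x = End \<beta> \<and> \<beta> \<in> ends V E \<and> (\<forall>r\<in>\<beta>. has_tail_in r C))"
  unfolding end_nbhd_def by blast

lemma inner_pts_eq_edge_interval:
  assumes "card e = 2" "u \<in> e"
  shows "inner_pts e = edge_interval e u 0 1"
proof
  show "edge_interval e u 0 1 \<subseteq> inner_pts e" by (auto simp: mem_edge_interval)
  show "inner_pts e \<subseteq> edge_interval e u 0 1"
  proof
    fix p assume p: "p \<in> inner_pts e"
    then obtain f where "p = Pt f" using inner_pts_Pt by auto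
    with p show "p \<in> edge_interval e u 0 1"
      using inner_pts_coord_bounds[OF assms] by (auto simp: mem_edge_interval)
  qed
qed

lemma openin_freudenthal_basis:
  "U \<in> edge_intervals V E \<union> vertex_stars V E \<union> end_nbhds V E \<Longrightarrow> openin (freudenthal V E) U"
  unfolding freudenthal_def by (rule topology_generated_by_Basis)

lemma openin_vertex_star:
  assumes "v \<in> V" "0 < \<epsilon>"
  shows "openin (freudenthal V E) (vertex_star E v \<epsilon>)"
proof -
  have "vertex_star E v \<epsilon> \<in> vertex_stars V E"
    unfolding vertex_stars_def vertex_star_def using assms by auto
  then show ?thesis by (simp add: openin_freudenthal_basis)
qed

lemma openin_edge_interval:
  assumes "e \<in> E" "u \<in> e"
  shows "openin (freudenthal V E) (edge_interval e u a b)"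
proof -
  have "edge_interval e u a b \<in> edge_intervals V E"
    unfolding edge_intervals_def edge_interval_def using assms by auto
  then show ?thesis by (simp add: openin_freudenthal_basis)
qed

lemma openin_end_nbhd:
  assumes "finite S" "S \<subseteq> V" "C \<in> components V E S" "\<alpha> \<in> ends V E" "\<forall>r\<in>\<alpha>. has_tail_in r C"
  shows "openin (freudenthal V E) (end_nbhd V E C)"
proof -
  have "end_nbhd V E C \<in> end_nbhds V E"
    unfolding end_nbhds_def end_nbhd_def using assms by auto
  then show ?thesis by (simp add: openin_freudenthal_basis)
qed

lemma openin_inner_pts:
  assumes "e \<in> E" "card e = 2"
  shows "openin (freudenthal V E) (inner_pts e)"
proof -
  obtain u where "u \<in> e" using assms(2) by (metis card_2_iff insertI1)
  then show ?thesis using inner_pts_eq_edge_interval[OF assms(2)] openin_edge_interval[OF assms(1)] by simp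
qed

lemma topspace_freudenthal_subset:
  "topspace (freudenthal V E) \<subseteq> vtx ` V \<union> (\<Union>e\<in>E. inner_pts e) \<union> End ` ends V E"
    (is "_ \<subseteq> ?P")
proof -
  have "\<Union>(edge_intervals V E) \<subseteq> ?P" unfolding edge_intervals_def by auto
  moreover have "\<Union>(vertex_stars V E) \<subseteq> ?P" unfolding vertex_stars_def by auto
  moreover have "\<Union>(end_nbhds V E) \<subseteq> ?P"
    unfolding end_nbhds_def using components_subset by fastforce
  ultimately show ?thesis
    unfolding freudenthal_def topology_generated_by_topspace by auto
qed

lemma topspace_freudenthal:
  assumes "graph V E"
  shows "topspace (freudenthal V E) = vtx ` V \<union> (\<Union>e\<in>E. inner_pts e) \<union> End ` ends V E"
proof (rule antisym[OF topspace_freudenthal_subset])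
  have "vtx v \<in> topspace (freudenthal V E)" if "v \<in> V" for v
    using openin_vertex_star[OF that, of 1 E] openin_subset by (fastforce simp: mem_vertex_star)
  moreover have "inner_pts e \<subseteq> topspace (freudenthal V E)" if "e \<in> E" for e
    by (rule openin_subset[OF openin_inner_pts[OF that graph_edge_card[OF assms that]]])
  moreover have "End \<alpha> \<in> topspace (freudenthal V E)" if \<alpha>: "\<alpha> \<in> ends V E" for \<alpha>
  proof -
    obtain C where C: "C \<in> components V E {}" "\<forall>r\<in>\<alpha>. has_tail_in r C"
      using end_has_tail_in_component[OF \<alpha> finite.emptyI empty_subsetI] by auto
    then have "End \<alpha> \<in> end_nbhd V E C" using \<alpha> by (auto simp: mem_end_nbhd)
    then show ?thesis using openin_end_nbhd[OF _ _ C(1) \<alpha> C(2)] openin_subset by auto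
  qed
  ultimately show "vtx ` V \<union> (\<Union>e\<in>E. inner_pts e) \<union> End ` ends V E \<subseteq> topspace (freudenthal V E)"
    by auto
qed

lemma freudenthal_pointE:
  assumes "x \<in> topspace (freudenthal V E)"
  obtains (vertex) v where "v \<in> V" "x = vtx v"
    | (inner) e where "e \<in> E" "x \<in> inner_pts e"
    | (ends) \<beta> where "\<beta> \<in> ends V E" "x = End \<beta>"
  using subsetD[OF topspace_freudenthal_subset assms] by auto

lemma edge_if_inner_pts_in_topspace:
  assumes "p \<in> topspace (freudenthal V E)" "p \<in> inner_pts e" "card e = 2"
  shows "e \<in> E"
  using assms(1)
proof (cases rule: freudenthal_pointE)
  case (vertex v)
  then show ?thesis using assms(2) vtx_notin_inner_pts[OF assms(3)] by simp
next
  case (inner e')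
  then show ?thesis using assms(2) inner_pts_disjoint by auto
qed (use assms(2) in auto)

lemma End_in_topspace_freudenthal:
  assumes "End \<beta> \<in> topspace (freudenthal V E)"
  shows "\<beta> \<in> ends V E"
  using assms by (cases rule: freudenthal_pointE) auto

lemma vertex_star_mono: "E \<subseteq> E' \<Longrightarrow> vertex_star E v \<epsilon> \<subseteq> vertex_star E' v \<epsilon>"
  unfolding vertex_star_def by auto

lemma edge_intervals_iff:
  "U \<in> edge_intervals V E \<longleftrightarrow> (\<exists>e u a b. e \<in> E \<and> u \<in> e \<and> U = edge_interval e u a b)"
  unfolding edge_intervals_def edge_interval_def by auto

lemma vertex_stars_iff:
  "U \<in> vertex_stars V E \<longleftrightarrow> (\<exists>v \<epsilon>. v \<in> V \<and> 0 < \<epsilon> \<and> U = vertex_star E v \<epsilon>)"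
  unfolding vertex_stars_def vertex_star_def by auto

lemma end_nbhds_iff:
  "U \<in> end_nbhds V E \<longleftrightarrow>
     (\<exists>S C. finite S \<and> S \<subseteq> V \<and> C \<in> components V E S \<and>
        (\<exists>\<alpha>\<in>ends V E. \<forall>r\<in>\<alpha>. has_tail_in r C) \<and> U = end_nbhd V E C)"
  unfolding end_nbhds_def end_nbhd_def by auto

lemma vtx_in_end_nbhd_iff:
  "graph V E \<Longrightarrow> vtx w \<in> end_nbhd V E C \<longleftrightarrow> w \<in> C"
  using vtx_notin_inner_pts graph_edge_card by (fastforce simp: mem_end_nbhd)

lemma inner_pts_in_end_nbhd_iff:
  assumes "graph V E" "e \<in> E" "p \<in> inner_pts e"
  shows "p \<in> end_nbhd V E C \<longleftrightarrow> e \<inter> C \<noteq> {}"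
proof
  assume "p \<in> end_nbhd V E C"
  then consider (vertex) v where "p = vtx v"
    | (inner) e' where "e' \<inter> C \<noteq> {}" "p \<in> inner_pts e'"
    | (ends) \<beta> where "p = End \<beta>"
    unfolding mem_end_nbhd by auto
  then show "e \<inter> C \<noteq> {}"
  proof cases
    case vertex
    then show ?thesis using assms(3) vtx_notin_inner_pts[OF graph_edge_card[OF assms(1,2)]] by simp
  next
    case inner
    then show ?thesis using inner_pts_disjoint[OF assms(3)] by simp
  qed (use assms(3) in simp)
next
  assume "e \<inter> C \<noteq> {}"
  then show "p \<in> end_nbhd V E C" unfolding mem_end_nbhd using assms(2,3) by blast
qed

lemma End_in_end_nbhd_iff:
  "End \<beta> \<in> end_nbhd V E C \<longleftrightarrow> \<beta> \<in> ends V E \<and> (\<forall>r\<in>\<beta>. has_tail_in r C)"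
  by (auto simp: mem_end_nbhd)

lemma vtx_in_vertex_star_iff:
  assumes "graph V E"
  shows "vtx u \<in> vertex_star E v \<epsilon> \<longleftrightarrow> u = v"
proof -
  have "vtx u \<notin> inner_pts e" if "e \<in> E" for e
    by (rule vtx_notin_inner_pts[OF graph_edge_card[OF assms that]])
  then show ?thesis unfolding mem_vertex_star by auto
qed

lemma inner_pts_in_vertex_star_iff:
  assumes "graph V E" "e \<in> E" "Pt f \<in> inner_pts e"
  shows "Pt f \<in> vertex_star E v \<epsilon> \<longleftrightarrow> v \<in> e \<and> 1 - \<epsilon> < f v"
proof -
  have "Pt f \<noteq> vtx v" using assms vtx_notin_inner_pts graph_edge_card by metis
  show ?thesis
  proof
    assume "Pt f \<in> vertex_star E v \<epsilon>"
    then obtain g e' where "Pt f = Pt g" "v \<in> e'" "Pt g \<in> inner_pts e'" "1 - \<epsilon> < g v"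
      using \<open>Pt f \<noteq> vtx v\<close> unfolding mem_vertex_star by auto
    then show "v \<in> e \<and> 1 - \<epsilon> < f v" using inner_pts_disjoint[OF assms(3)] by auto
  next
    assume "v \<in> e \<and> 1 - \<epsilon> < f v"
    then show "Pt f \<in> vertex_star E v \<epsilon>" using assms(2,3) unfolding mem_vertex_star by blast
  qed
qed

section \<open>The natural map from the compactification of a subgraph\<close>

definition lift_point :: "'v set \<Rightarrow> 'v set set \<Rightarrow> 'v fpoint \<Rightarrow> 'v fpoint" where
  "lift_point V E x = (case x of Pt f \<Rightarrow> Pt f | End \<beta> \<Rightarrow> End (coarser_end V E \<beta>))"

lemma lift_point_Pt [simp]: "lift_point V E (Pt f) = Pt f"
  by (simp add: lift_point_def)

lemma lift_point_End [simp]: "lift_point V E (End \<beta>) = End (coarser_end V E \<beta>)"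
  by (simp add: lift_point_def)

lemma lift_point_vtx [simp]: "lift_point V E (vtx v) = vtx v"
  by (simp add: vtx_def)

lemma lift_point_inner_pts: "p \<in> inner_pts e \<Longrightarrow> lift_point V E p = p"
  using inner_pts_Pt by fastforce

lemma lift_point_image_inner_pts [simp]: "lift_point V E ` inner_pts e = inner_pts e"
proof -
  have "lift_point V E ` inner_pts e = (\<lambda>p. p) ` inner_pts e"
    using lift_point_inner_pts by (intro image_cong) auto
  then show ?thesis by simp
qed

lemma lift_point_preimage_of_Pt_points:
  assumes "U \<subseteq> range Pt"
  shows "lift_point V E -` U = U"
proof -
  have "lift_point V E x \<in> U \<longleftrightarrow> x \<in> U" for x
    using assms by (cases x) auto
  then show ?thesis by auto
qed

lemma inj_on_lift_point:
  assumes "EF \<subseteq> EG" "faithful V EF V EG"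
  shows "inj_on (lift_point V EG) (topspace (freudenthal V EF))"
proof
  fix x y assume x: "x \<in> topspace (freudenthal V EF)" and y: "y \<in> topspace (freudenthal V EF)"
    and eq: "lift_point V EG x = lift_point V EG y"
  show "x = y"
  proof (cases x; cases y)
    fix \<beta>1 \<beta>2 assume xy: "x = End \<beta>1" "y = End \<beta>2"
    then have "\<beta>1 \<in> ends V EF" "\<beta>2 \<in> ends V EF"
      using x y End_in_topspace_freudenthal by auto
    moreover have "coarser_end V EG \<beta>1 = coarser_end V EG \<beta>2" using eq xy by simp
    ultimately show "x = y" using inj_on_coarser_end[OF assms] xy by (auto dest: inj_onD)
  qed (use eq in auto)
qed

lemma edge_interval_preimage_lift_point:
  assumes "graph V EG" "EF \<subseteq> EG" "e \<in> EG" "u \<in> e"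
  shows "openin (freudenthal V EF) (lift_point V EG -` edge_interval e u a b \<inter> topspace (freudenthal V EF))"
proof -
  have "lift_point V EG -` edge_interval e u a b = edge_interval e u a b"
    by (rule lift_point_preimage_of_Pt_points) (auto simp: mem_edge_interval)
  moreover have "edge_interval e u a b \<inter> topspace (freudenthal V EF) = {}" if "e \<notin> EF"
    using that edge_if_inner_pts_in_topspace[OF _ _ graph_edge_card[OF assms(1,3)]]
    by (auto simp: mem_edge_interval)
  ultimately show ?thesis
    using openin_edge_interval[of e EF u V a b] openin_subset assms(4) by (cases "e \<in> EF") auto
qed

lemma vertex_star_preimage_lift_point:
  assumes "graph V EG" "EF \<subseteq> EG" "v \<in> V" "0 < \<epsilon>"
  shows "openin (freudenthal V EF) (lift_point V EG -` vertex_star EG v \<epsilon> \<inter> topspace (freudenthal V EF))"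
proof -
  have "lift_point V EG -` vertex_star EG v \<epsilon> = vertex_star EG v \<epsilon>"
    by (rule lift_point_preimage_of_Pt_points) (auto simp: mem_vertex_star vtx_def)
  moreover have "vertex_star EG v \<epsilon> \<inter> topspace (freudenthal V EF) = vertex_star EF v \<epsilon>"
  proof
    show "vertex_star EG v \<epsilon> \<inter> topspace (freudenthal V EF) \<subseteq> vertex_star EF v \<epsilon>"
    proof
      fix x assume x: "x \<in> vertex_star EG v \<epsilon> \<inter> topspace (freudenthal V EF)"
      then consider "x = vtx v"
        | f e where "x = Pt f" "e \<in> EG" "v \<in> e" "Pt f \<in> inner_pts e" "1 - \<epsilon> < f v"
        by (auto simp: mem_vertex_star)
      then show "x \<in> vertex_star EF v \<epsilon>"
      proof cases
        case 2
        have "Pt f \<in> topspace (freudenthal V EF)" using x 2(1) by simp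
        then have "e \<in> EF"
          by (rule edge_if_inner_pts_in_topspace[OF _ 2(4) graph_edge_card[OF assms(1) 2(2)]])
        with 2 show ?thesis by (auto simp: mem_vertex_star)
      qed (simp add: mem_vertex_star)
    qed
    show "vertex_star EF v \<epsilon> \<subseteq> vertex_star EG v \<epsilon> \<inter> topspace (freudenthal V EF)"
      using openin_subset[OF openin_vertex_star[OF assms(3,4)]] vertex_star_mono[OF assms(2)]
      by auto
  qed
  ultimately show ?thesis using openin_vertex_star[OF assms(3,4)] by simp
qed

lemma lift_point_end_nbhd_subset:
  assumes "EF \<subseteq> EG" "finite S" "S \<subseteq> V"
    and "C' \<in> components V EF S" "C \<in> components V EG S" "C' \<subseteq> C"
  shows "lift_point V EG ` end_nbhd V EF C' \<subseteq> end_nbhd V EG C"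
proof
  fix y assume "y \<in> lift_point V EG ` end_nbhd V EF C'"
  then obtain x where x: "x \<in> end_nbhd V EF C'" "y = lift_point V EG x" by auto
  then consider (vertex) v where "v \<in> C'" "x = vtx v"
    | (inner) e where "e \<in> EF" "e \<inter> C' \<noteq> {}" "x \<in> inner_pts e"
    | (ends) \<gamma> where "\<gamma> \<in> ends V EF" "\<forall>r\<in>\<gamma>. has_tail_in r C'" "x = End \<gamma>"
    unfolding mem_end_nbhd by auto
  then show "y \<in> end_nbhd V EG C"
  proof cases
    case vertex
    then show ?thesis using x(2) assms(6) by (auto simp: mem_end_nbhd)
  next
    case inner
    then have "y = x" "e \<in> EG" "e \<inter> C \<noteq> {}"
      using x(2) lift_point_inner_pts[OF inner(3)] assms(1,6) by auto
    then show ?thesis using inner(3) unfolding mem_end_nbhd by blast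
  next
    case ends
    obtain r where r: "r \<in> \<gamma>" using ends_nonempty[OF ends(1)] ..
    have \<gamma>G: "coarser_end V EG \<gamma> = end_of V EG r" by (rule coarser_end_eq[OF assms(1) ends(1) r])
    have rG: "is_ray V EG r" using ends_is_ray[OF ends(1) r] is_ray_mono[OF assms(1)] by simp
    have "has_tail_in r C" using ends(2) r has_tail_in_mono assms(6) by auto
    then have "\<forall>r'\<in>end_of V EG r. has_tail_in r' C"
      using end_has_tail_in_componentI[OF end_of_ends[OF rG] mem_end_of[OF rG] _ assms(5,2,3)] by simp
    then show ?thesis
      using x(2) ends(3) \<gamma>G coarser_end_ends[OF assms(1) ends(1)] by (auto simp: mem_end_nbhd)
  qed
qed

lemma lift_point_topspace:
  assumes "graph V EG" "EF \<subseteq> EG"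
  shows "lift_point V EG ` topspace (freudenthal V EF) \<subseteq> topspace (freudenthal V EG)"
proof
  fix y assume "y \<in> lift_point V EG ` topspace (freudenthal V EF)"
  then obtain x where x: "x \<in> topspace (freudenthal V EF)" "y = lift_point V EG x" by auto
  from x(1) show "y \<in> topspace (freudenthal V EG)"
  proof (cases rule: freudenthal_pointE)
    case (inner e)
    then show ?thesis
      using x(2) lift_point_inner_pts[OF inner(2)] assms(2) topspace_freudenthal[OF assms(1)] by auto
  next
    case (ends \<beta>)
    then show ?thesis
      using x(2) coarser_end_ends[OF assms(2)] topspace_freudenthal[OF assms(1)] by auto
  qed (use x(2) topspace_freudenthal[OF assms(1)] in auto)
qed

lemma end_component_in_coarser_component:
  assumes "EF \<subseteq> EG" "finite S" "S \<subseteq> V" "C \<in> components V EG S" "\<beta> \<in> ends V EF"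
    and "\<forall>r\<in>coarser_end V EG \<beta>. has_tail_in r C"
  obtains C' where "C' \<in> components V EF S" "\<forall>r\<in>\<beta>. has_tail_in r C'" "C' \<subseteq> C"
proof -
  obtain C' where C': "C' \<in> components V EF S" "\<forall>r\<in>\<beta>. has_tail_in r C'"
    using end_has_tail_in_component[OF assms(5,2,3)] by auto
  obtain D where D: "D \<in> components V EG S" "C' \<subseteq> D" using components_mono[OF assms(1) C'(1)] ..
  obtain r where r: "r \<in> \<beta>" using ends_nonempty[OF assms(5)] ..
  have "is_ray V EG r" using ends_is_ray[OF assms(5) r] is_ray_mono[OF assms(1)] by simp
  then have "r \<in> coarser_end V EG \<beta>" using coarser_end_eq[OF assms(1,5) r] mem_end_of by simp
  then have "has_tail_in r C" using assms(6) by simp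
  moreover have "has_tail_in r D" using C'(2) r has_tail_in_mono[OF _ D(2)] by simp
  ultimately have "D = C" using has_tail_in_components_unique[OF D(1) assms(4)] by simp
  then show ?thesis using that C' D(2) by simp
qed

lemma end_nbhd_preimage_lift_point:
  assumes "graph V EG" "EF \<subseteq> EG" "finite S" "S \<subseteq> V" "C \<in> components V EG S"
  shows "openin (freudenthal V EF) (lift_point V EG -` end_nbhd V EG C \<inter> topspace (freudenthal V EF))"
    (is "openin ?F ?P")
proof (subst openin_subopen, intro ballI)
  fix x assume "x \<in> ?P"
  then have lx: "lift_point V EG x \<in> end_nbhd V EG C" and xF: "x \<in> topspace ?F" by auto
  have local: "\<exists>T. openin ?F T \<and> x \<in> T \<and> T \<subseteq> ?P"
    if "openin ?F T" "x \<in> T" "lift_point V EG ` T \<subseteq> end_nbhd V EG C" for T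
    using that openin_subset by blast
  from xF show "\<exists>T. openin ?F T \<and> x \<in> T \<and> T \<subseteq> ?P"
  proof (cases rule: freudenthal_pointE)
    case (vertex w)
    then have "w \<in> C" using lx vtx_in_end_nbhd_iff[OF assms(1)] by simp
    then have "lift_point V EG ` vertex_star EF w 1 \<subseteq> end_nbhd V EG C"
      using assms(2) vtx_in_end_nbhd_iff[OF assms(1)] inner_pts_in_end_nbhd_iff[OF assms(1)]
      by (fastforce simp: mem_vertex_star)
    moreover have "x \<in> vertex_star EF w 1" using vertex(2) by (simp add: mem_vertex_star)
    ultimately show ?thesis using local[OF openin_vertex_star[OF vertex(1) zero_less_one]] by simp
  next
    case (inner e)
    have eG: "e \<in> EG" using inner(1) assms(2) by auto
    then have "e \<inter> C \<noteq> {}"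
      using lx lift_point_inner_pts[OF inner(2)] inner_pts_in_end_nbhd_iff[OF assms(1) eG inner(2)] by simp
    then have "lift_point V EG ` inner_pts e \<subseteq> end_nbhd V EG C"
      using inner_pts_in_end_nbhd_iff[OF assms(1) eG] by auto
    then show ?thesis
      using local[OF openin_inner_pts[OF inner(1) graph_edge_card[OF assms(1) eG]] inner(2)] by simp
  next
    case (ends \<beta>)
    have "\<forall>r\<in>coarser_end V EG \<beta>. has_tail_in r C" using lx ends(2) by (simp add: End_in_end_nbhd_iff)
    then obtain C' where C': "C' \<in> components V EF S" "\<forall>r\<in>\<beta>. has_tail_in r C'" "C' \<subseteq> C"
      by (rule end_component_in_coarser_component[OF assms(2,3,4,5) ends(1)])
    have "x \<in> end_nbhd V EF C'" using ends C'(2) by (simp add: End_in_end_nbhd_iff)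
    then show ?thesis
      using local[OF openin_end_nbhd[OF assms(3,4) C'(1) ends(1) C'(2)]]
        lift_point_end_nbhd_subset[OF assms(2,3,4) C'(1) assms(5) C'(3)] by simp
  qed
qed

lemma continuous_map_lift_point:
  assumes "graph V EG" "EF \<subseteq> EG"
  shows "continuous_map (freudenthal V EF) (freudenthal V EG) (lift_point V EG)"
  unfolding freudenthal_def[of V EG]
proof (rule continuous_on_generated_topo)
  fix U assume "U \<in> edge_intervals V EG \<union> vertex_stars V EG \<union> end_nbhds V EG"
  then show "openin (freudenthal V EF) (lift_point V EG -` U \<inter> topspace (freudenthal V EF))"
    unfolding Un_iff edge_intervals_iff vertex_stars_iff end_nbhds_iff
    using edge_interval_preimage_lift_point[OF assms] vertex_star_preimage_lift_point[OF assms]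
      end_nbhd_preimage_lift_point[OF assms] by auto
next
  show "lift_point V EG ` topspace (freudenthal V EF)
      \<subseteq> \<Union>(edge_intervals V EG \<union> vertex_stars V EG \<union> end_nbhds V EG)"
    using lift_point_topspace[OF assms] unfolding freudenthal_def topology_generated_by_topspace .
qed

section \<open>The Freudenthal compactification is Hausdorff\<close>

definition separated_points :: "'a topology \<Rightarrow> 'a \<Rightarrow> 'a \<Rightarrow> bool" where
  "separated_points X x y \<longleftrightarrow> (\<exists>U W. openin X U \<and> openin X W \<and> x \<in> U \<and> y \<in> W \<and> U \<inter> W = {})"

lemma separated_points_sym: "separated_points X x y \<Longrightarrow> separated_points X y x"
  unfolding separated_points_def by blast

lemma separated_pointsI:
  "openin X U \<Longrightarrow> openin X W \<Longrightarrow> x \<in> U \<Longrightarrow> y \<in> W \<Longrightarrow> U \<inter> W = {} \<Longrightarrow> separated_points X x y"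
  unfolding separated_points_def by blast

lemma separated_vertices:
  assumes "graph V E" "v \<in> V" "w \<in> V" "v \<noteq> w"
  shows "separated_points (freudenthal V E) (vtx v) (vtx w)"
proof (rule separated_pointsI[OF openin_vertex_star[OF assms(2)] openin_vertex_star[OF assms(3)]])
  show "vertex_star E v (1/2) \<inter> vertex_star E w (1/2) = {}"
  proof -
    have "z \<notin> vertex_star E w (1/2)" if z: "z \<in> vertex_star E v (1/2)" for z
    proof
      assume zw: "z \<in> vertex_star E w (1/2)"
      from z consider "z = vtx v"
        | f e where "z = Pt f" "e \<in> E" "v \<in> e" "Pt f \<in> inner_pts e" "1/2 < f v"
        by (auto simp: mem_vertex_star)
      then show False
      proof cases
        case 1
        then show False using zw assms(4) vtx_in_vertex_star_iff[OF assms(1)] by simp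
      next
        case 2
        then have "w \<in> e" "1/2 < f w" using zw inner_pts_in_vertex_star_iff[OF assms(1)] by auto
        then show False
          using 2 inner_pts_coord_sum[OF graph_edge_card[OF assms(1) 2(2)] 2(3) _ assms(4) 2(4)] by simp
      qed
    qed
    then show ?thesis by auto
  qed
qed (auto simp: mem_vertex_star)

lemma separated_edge_coords:
  assumes "e \<in> E" "u \<in> e" "Pt g \<in> inner_pts e" "Pt h \<in> inner_pts e" "g u < h u"
  shows "separated_points (freudenthal V E) (Pt g) (Pt h)"
proof -
  define m where "m = (g u + h u) / 2"
  have "g u < m" "m < h u" using assms(5) unfolding m_def by auto
  then show ?thesis
    using assms(3,4)
    by (intro separated_pointsI[OF openin_edge_interval[OF assms(1,2), of V "g u - 1" m]
          openin_edge_interval[OF assms(1,2), of V m "h u + 1"]])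
      (auto simp: mem_edge_interval)
qed

lemma separated_inner_pts:
  assumes "graph V E" "e \<in> E" "p \<in> inner_pts e" "e' \<in> E" "q \<in> inner_pts e'" "p \<noteq> q"
  shows "separated_points (freudenthal V E) p q"
proof (cases "e = e'")
  case False
  then show ?thesis
    using inner_pts_disjoint assms(3,5)
    by (intro separated_pointsI[OF openin_inner_pts[OF assms(2) graph_edge_card[OF assms(1,2)]]
          openin_inner_pts[OF assms(4) graph_edge_card[OF assms(1,4)]]]) auto
next
  case True
  obtain g h where p: "p = Pt g" and q: "q = Pt h" using inner_pts_Pt assms(3,5) by metis
  then obtain u where u: "g u \<noteq> h u" using assms(6) by auto
  have "u \<in> e"
  proof (rule ccontr)
    assume "u \<notin> e"
    then have "g u = 0" "h u = 0" using assms(3,5) True p q by (auto simp: Pt_in_inner_pts_iff)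
    with u show False by simp
  qed
  then show ?thesis
    using u separated_edge_coords[OF assms(2) _ _ _, of u] separated_points_sym assms(3,5) True p q
    by (metis linorder_neqE)
qed

lemma separated_vertex_inner_pt:
  assumes "graph V E" "v \<in> V" "e \<in> E" "p \<in> inner_pts e"
  shows "separated_points (freudenthal V E) (vtx v) p"
proof -
  have c: "card e = 2" by (rule graph_edge_card[OF assms(1,3)])
  obtain g where p: "p = Pt g" using inner_pts_Pt[OF assms(4)] by auto
  show ?thesis
  proof (cases "v \<in> e")
    case True
    define b where "b = (1 + g v) / 2"
    have "0 < g v" "g v < 1" using inner_pts_coord_bounds[OF c True] assms(4) p by auto
    then have b: "0 < 1 - b" and "p \<in> edge_interval e v (-1) b"
      using assms(4) p unfolding b_def by (auto simp: mem_edge_interval)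
    moreover have "vertex_star E v (1 - b) \<inter> edge_interval e v (-1) b = {}"
      using inner_pts_in_vertex_star_iff[OF assms(1,3)] by (fastforce simp: mem_edge_interval)
    moreover have "vtx v \<in> vertex_star E v (1 - b)" by (simp add: mem_vertex_star)
    ultimately show ?thesis
      by (intro separated_pointsI[OF openin_vertex_star[OF assms(2) b] openin_edge_interval[OF assms(3) True]])
  next
    case False
    then have "vertex_star E v 1 \<inter> inner_pts e = {}"
      using inner_pts_Pt inner_pts_in_vertex_star_iff[OF assms(1,3)] by fastforce
    moreover have "vtx v \<in> vertex_star E v 1" by (simp add: mem_vertex_star)
    ultimately show ?thesis
      using assms(4) by (intro separated_pointsI[OF openin_vertex_star[OF assms(2) zero_less_one]
        openin_inner_pts[OF assms(3) c]])
  qed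
qed

lemma end_nbhd_disjoint_subgraph:
  assumes "graph V E" "C \<in> components V E S"
  shows "end_nbhd V E C \<inter> (vtx ` S \<union> (\<Union>e\<in>{e\<in>E. e \<subseteq> S}. inner_pts e)) = {}"
proof -
  have "e \<inter> C = {}" if "e \<subseteq> S" for e using that components_subset[OF assms(2)] by auto
  moreover have "C \<inter> S = {}" using components_subset[OF assms(2)] by auto
  ultimately show ?thesis
    by (auto simp: vtx_in_end_nbhd_iff[OF assms(1)] inner_pts_in_end_nbhd_iff[OF assms(1)])
qed

lemma separated_end_subgraph_point:
  assumes "graph V E" "\<alpha> \<in> ends V E" "finite S" "S \<subseteq> V"
    and "openin (freudenthal V E) U" "x \<in> U" "U \<subseteq> vtx ` S \<union> (\<Union>e\<in>{e\<in>E. e \<subseteq> S}. inner_pts e)"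
  shows "separated_points (freudenthal V E) (End \<alpha>) x"
proof -
  obtain C where C: "C \<in> components V E S" "\<forall>r\<in>\<alpha>. has_tail_in r C"
    using end_has_tail_in_component[OF assms(2,3,4)] by auto
  have "End \<alpha> \<in> end_nbhd V E C" using assms(2) C(2) by (simp add: End_in_end_nbhd_iff)
  moreover have "end_nbhd V E C \<inter> U = {}"
    using end_nbhd_disjoint_subgraph[OF assms(1) C(1)] assms(7) by auto
  ultimately show ?thesis
    by (rule separated_pointsI[OF openin_end_nbhd[OF assms(3,4) C(1) assms(2) C(2)] assms(5) _ assms(6)])
qed

lemma separated_end_vertex:
  assumes "graph V E" "locally_finite V E" "\<alpha> \<in> ends V E" "v \<in> V"
  shows "separated_points (freudenthal V E) (End \<alpha>) (vtx v)"
proof -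
  define S where "S = insert v (\<Union>{e\<in>E. v \<in> e})"
  have "finite e" if "e \<in> E" for e
    using graph_edge_card[OF assms(1) that] by (intro card_ge_0_finite) simp
  then have "finite S" using assms(2,4) unfolding S_def locally_finite_def by auto
  moreover have "S \<subseteq> V" using assms(1,4) unfolding S_def graph_def by auto
  moreover have "e \<subseteq> S" if "v \<in> e" "e \<in> E" for e using that unfolding S_def by auto
  then have "vertex_star E v 1 \<subseteq> vtx ` S \<union> (\<Union>e\<in>{e\<in>E. e \<subseteq> S}. inner_pts e)"
    unfolding S_def by (auto simp: mem_vertex_star)
  moreover have "vtx v \<in> vertex_star E v 1" by (simp add: mem_vertex_star)
  ultimately show ?thesis
    using separated_end_subgraph_point[OF assms(1,3) _ _ openin_vertex_star[OF assms(4) zero_less_one]]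
    by blast
qed

lemma separated_end_inner_pt:
  assumes "graph V E" "\<alpha> \<in> ends V E" "e \<in> E" "p \<in> inner_pts e"
  shows "separated_points (freudenthal V E) (End \<alpha>) p"
proof -
  have "finite e" "e \<subseteq> V" using assms(1,3) unfolding graph_def by (auto intro: card_ge_0_finite)
  moreover have "inner_pts e \<subseteq> vtx ` e \<union> (\<Union>e'\<in>{e'\<in>E. e' \<subseteq> e}. inner_pts e')" using assms(3) by auto
  ultimately show ?thesis
    using separated_end_subgraph_point[OF assms(1,2) _ _ openin_inner_pts[OF assms(3)] assms(4)]
      graph_edge_card[OF assms(1,3)] by simp
qed

lemma end_nbhds_disjoint:
  assumes "graph V E" "C1 \<in> components V E S" "C2 \<in> components V E S" "C1 \<noteq> C2"
  shows "end_nbhd V E C1 \<inter> end_nbhd V E C2 = {}"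
proof -
  have False if z1: "z \<in> end_nbhd V E C1" and z2: "z \<in> end_nbhd V E C2" for z
  proof -
    from z1 consider (vertex) v where "v \<in> C1" "z = vtx v"
      | (inner) e where "e \<in> E" "e \<inter> C1 \<noteq> {}" "z \<in> inner_pts e"
      | (ends) \<beta> where "z = End \<beta>" "\<beta> \<in> ends V E" "\<forall>r\<in>\<beta>. has_tail_in r C1"
      unfolding mem_end_nbhd by auto
    then show False
    proof cases
      case vertex
      then have "v \<in> C2" using z2 by (simp add: vtx_in_end_nbhd_iff[OF assms(1)])
      then show False using components_eqI[OF assms(2,3) vertex(1)] assms(4) by simp
    next
      case inner
      then have "e \<inter> C2 \<noteq> {}" using z2 inner_pts_in_end_nbhd_iff[OF assms(1) inner(1,3)] by simp
      then show False using components_eq_if_edge[OF assms(1) inner(1) assms(2,3) inner(2)] assms(4) by simp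
    next
      case ends
      obtain r where "r \<in> \<beta>" using ends_nonempty[OF ends(2)] ..
      moreover have "\<forall>r\<in>\<beta>. has_tail_in r C2" using z2 ends(1) by (simp add: End_in_end_nbhd_iff)
      ultimately show False
        using ends(3) has_tail_in_components_unique[OF assms(2,3)] assms(4) by auto
    qed
  qed
  then show ?thesis by auto
qed

lemma separated_ends:
  assumes "graph V E" "\<alpha> \<in> ends V E" "\<beta> \<in> ends V E" "\<alpha> \<noteq> \<beta>"
  shows "separated_points (freudenthal V E) (End \<alpha>) (End \<beta>)"
proof -
  obtain r r' where r: "r \<in> \<alpha>" "r' \<in> \<beta>" using ends_nonempty assms(2,3) by metis
  have "\<not> ray_equiv V E r r'"
    using ends_eq_end_of[OF assms(2) r(1)] ends_eq_end_of[OF assms(3) r(2)] assms(4)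
      end_of_eq_iff[OF ends_is_ray[OF assms(2) r(1)] ends_is_ray[OF assms(3) r(2)]] by simp
  then obtain S where S: "finite S" "S \<subseteq> V"
    and no_common: "\<not> (\<exists>C\<in>components V E S. has_tail_in r C \<and> has_tail_in r' C)"
    unfolding ray_equiv_def by auto
  obtain C1 where C1: "C1 \<in> components V E S" "\<forall>r\<in>\<alpha>. has_tail_in r C1"
    using end_has_tail_in_component[OF assms(2) S] by auto
  obtain C2 where C2: "C2 \<in> components V E S" "\<forall>r\<in>\<beta>. has_tail_in r C2"
    using end_has_tail_in_component[OF assms(3) S] by auto
  have "C1 \<noteq> C2" using no_common C1 C2 r by auto
  then show ?thesis
    using end_nbhds_disjoint[OF assms(1) C1(1) C2(1)] assms(2,3) C1(2) C2(2)
    by (intro separated_pointsI[OF openin_end_nbhd[OF S C1(1) assms(2) C1(2)]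
          openin_end_nbhd[OF S C2(1) assms(3) C2(2)]]) (auto simp: End_in_end_nbhd_iff)
qed

lemma Hausdorff_freudenthal:
  assumes "graph V E" "locally_finite V E"
  shows "Hausdorff_space (freudenthal V E)"
proof -
  have "separated_points (freudenthal V E) x y"
    if x: "x \<in> topspace (freudenthal V E)" and y: "y \<in> topspace (freudenthal V E)" and "x \<noteq> y"
    for x y
    using x
  proof (cases rule: freudenthal_pointE)
    case (vertex v)
    from y show ?thesis
      by (cases rule: freudenthal_pointE)
        (use vertex \<open>x \<noteq> y\<close> separated_vertices separated_vertex_inner_pt
          separated_points_sym[OF separated_end_vertex[OF assms]] assms in auto)
  next
    case (inner e)
    from y show ?thesis
      by (cases rule: freudenthal_pointE)
        (use inner \<open>x \<noteq> y\<close> separated_inner_pts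
          separated_points_sym[OF separated_vertex_inner_pt[OF assms(1)]]
          separated_points_sym[OF separated_end_inner_pt[OF assms(1)]] assms in auto)
  next
    case (ends \<alpha>)
    from y show ?thesis
      by (cases rule: freudenthal_pointE)
        (use ends \<open>x \<noteq> y\<close> separated_ends separated_end_vertex separated_end_inner_pt assms in auto)
  qed
  then show ?thesis unfolding Hausdorff_space_def separated_points_def disjnt_def by blast
qed

lemma embedding_map_compose_into_Hausdorff:
  assumes "embedding_map X Y f" "compact_space X"
    and "continuous_map Y Z g" "inj_on g (topspace Y)" "Hausdorff_space Z"
  shows "embedding_map X Z (g \<circ> f)"
proof (rule continuous_imp_embedding_map)
  have hom: "homeomorphic_map X (subtopology Y (f ` topspace X)) f"
    using assms(1) unfolding embedding_map_def .
  then have f: "continuous_map X Y f"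
    using homeomorphic_imp_continuous_map continuous_map_in_subtopology by blast
  then show "continuous_map X Z (g \<circ> f)" using assms(3) by (rule continuous_map_compose)
  have "f ` topspace X \<subseteq> topspace Y" using f by (rule continuous_map_image_subset_topspace)
  then show "inj_on (g \<circ> f) (topspace X)"
    using homeomorphic_imp_injective_map[OF hom] inj_on_subset[OF assms(4)] by (simp add: comp_inj_on)
qed (use assms in auto)

theorem lemma1:
  fixes V :: "'v set" and EG EF :: "'v set set"
  assumes "graph V EG"
    and "infinite V"
    and "locally_finite V EG"
    and "EF \<subseteq> EG"
    and "faithful V EF V EG"
    and "\<exists>Z. hamiltonian_circle V EF Z"
  shows "\<exists>Z. hamiltonian_circle V EG Z"
proof -
  let ?S1 = "top_of_set (sphere (0::complex) 1)"
  obtain \<phi> where \<phi>: "embedding_map ?S1 (freudenthal V EF) \<phi>" and vertices: "\<forall>v\<in>V. vtx v \<in> \<phi> ` sphere 0 1"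
    using assms(6) unfolding hamiltonian_circle_def by auto
  have "embedding_map ?S1 (freudenthal V EG) (lift_point V EG \<circ> \<phi>)"
    by (rule embedding_map_compose_into_Hausdorff[OF \<phi> compact_space_subtopology
          continuous_map_lift_point[OF assms(1,4)] inj_on_lift_point[OF assms(4,5)]
          Hausdorff_freudenthal[OF assms(1,3)]]) simp
  moreover have "vtx v \<in> (lift_point V EG \<circ> \<phi>) ` sphere 0 1" if v: "v \<in> V" for v
  proof -
    obtain z where "z \<in> sphere 0 1" "\<phi> z = vtx v" using vertices v by force
    then show ?thesis by (intro image_eqI[of _ _ z]) simp_all
  qed
  ultimately show ?thesis unfolding hamiltonian_circle_def by blast
qed

end
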